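(* For every integer $n\ge 2$, the lattice $M_n$ is a Shannon lattice.
   Context: $M_n$ is the lattice consisting of a smallest element, a largest element, and $n-2$ pairwise incomparable elements lying strictly between them. Lattices have order $\supseteq$, meet $\cap$, join $\uplus$. A polymatroid function on a finite lattice $L$ is $h:L\to\mathbb{R}$ that is non-negative, increasing ($x\supseteq y\Rightarrow h(x)\ge h(y)$) and submodular ($h(x)+h(y)\ge h(x\uplus y)+h(x\cap y)$). $h$ is entropic if there exist jointly distributed discrete random variables $(X_x)_{x\in L}$ such that for all $x,y$ the variable $X_{x\uplus y}$ and the pair $(X_x,X_y)$ are functions of each other, and $h(x)=H(X_x)$ (Shannon entropy) for all $x$. $L$ is a Shannon lattice if the set of polymatroid functions on $L$ equals the closure in $\mathbb{R}^L$ of the set of entropic functions on $L$. *)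

theory Defs
  imports "HOL-Probability.Probability"
begin

text \<open>The lattice M_n, n >= 2, on the carrier {0..<n}: element 0 is the least
  element, element 1 the greatest, and 2, ..., n-1 are the n-2 pairwise
  incomparable middle elements.\<close>

definition Mn_carrier :: "nat \<Rightarrow> nat set" where
  "Mn_carrier n = {0..<n}"

definition Mn_le :: "nat \<Rightarrow> nat \<Rightarrow> bool" where
  "Mn_le x y \<longleftrightarrow> x = y \<or> x = 0 \<or> y = 1"

definition Mn_join :: "nat \<Rightarrow> nat \<Rightarrow> nat" where
  "Mn_join x y = (if x = y then x else if x = 0 then y else if y = 0 then x else 1)"

definition Mn_meet :: "nat \<Rightarrow> nat \<Rightarrow> nat" where
  "Mn_meet x y = (if x = y then x else if x = 1 then y else if y = 1 then x else 0)"

definition polymatroid :: "nat \<Rightarrow> (nat \<Rightarrow> real) \<Rightarrow> bool" where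
  "polymatroid n h \<longleftrightarrow>
     (\<forall>x\<in>Mn_carrier n. 0 \<le> h x) \<and>
     (\<forall>x\<in>Mn_carrier n. \<forall>y\<in>Mn_carrier n. Mn_le y x \<longrightarrow> h y \<le> h x) \<and>
     (\<forall>x\<in>Mn_carrier n. \<forall>y\<in>Mn_carrier n.
        h x + h y \<ge> h (Mn_join x y) + h (Mn_meet x y))"

definition has_entropy :: "'w pmf \<Rightarrow> ('w \<Rightarrow> nat) \<Rightarrow> real \<Rightarrow> bool" where
  "has_entropy p X r \<longleftrightarrow>
     ((\<lambda>v. - (measure_pmf.prob p {w. X w = v}) * log 2 (measure_pmf.prob p {w. X w = v}))
        has_sum r) UNIV"

text \<open>Entropic functions on M_n: jointly distributed discrete random variables
  (X_x) for x in M_n (the joint outcome is a function nat => nat; X_x w = w x),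
  such that X_(x join y) and (X_x, X_y) are (almost surely) functions of each other,
  and h x = H(X_x).\<close>

definition entropic :: "nat \<Rightarrow> (nat \<Rightarrow> real) \<Rightarrow> bool" where
  "entropic n h \<longleftrightarrow>
     (\<exists>p :: (nat \<Rightarrow> nat) pmf.
        (\<forall>x\<in>Mn_carrier n. \<forall>y\<in>Mn_carrier n.
           (\<exists>f g. \<forall>w\<in>set_pmf p.
              w (Mn_join x y) = f (w x, w y) \<and> (w x, w y) = g (w (Mn_join x y)))) \<and>
        (\<forall>x\<in>Mn_carrier n. has_entropy p (\<lambda>w. w x) (h x)))"

text \<open>Closure in R^L of the entropic functions: since L is finite, this is the set of
  pointwise limits (on L) of sequences of entropic functions.\<close>

definition entropic_closure :: "nat \<Rightarrow> (nat \<Rightarrow> real) \<Rightarrow> bool" where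
  "entropic_closure n h \<longleftrightarrow>
     (\<exists>hs :: nat \<Rightarrow> nat \<Rightarrow> real. (\<forall>k. entropic n (hs k)) \<and>
        (\<forall>x\<in>Mn_carrier n. (\<lambda>k. hs k x) \<longlonglongrightarrow> h x))"

definition Shannon_lattice_Mn :: "nat \<Rightarrow> bool" where
  "Shannon_lattice_Mn n \<longleftrightarrow> (\<forall>h. polymatroid n h \<longleftrightarrow> entropic_closure n h)"

end

theory Submission
  imports Defs "HOL-Real_Asymp.Real_Asymp"
begin

text \<open>
  Entropic functions are polymatroids: monotonicity is data processing, and for two distinct
  atoms \<open>x, y\<close> the top carries the pair \<open>(X\<^sub>x, X\<^sub>y)\<close> while the bottom is a common function
  of \<open>X\<^sub>x\<close> and of \<open>X\<^sub>y\<close>, so submodularity is \<open>H(X, Y) + H(Z) \<le> H(X) + H(Y)\<close> for such a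
  common function \<open>Z\<close>, an instance of Gibbs' inequality. Being defined by closed conditions,
  the polymatroids also contain the closure of the entropic functions.

  Conversely, this closure is a convex cone: independent realisations add entropies, and
  \<open>t h\<close> is approximated by mixing \<open>N h\<close> with a constant with probability \<open>1 - t / N\<close>.
  A polymatroid on \<open>M\<^sub>n\<close> is a non-negative combination of constants, of functions vanishing
  at the bottom and at one atom and constant elsewhere, and of functions vanishing at the
  bottom, equal to \<open>t\<close> at the top and on a set of atoms and to \<open>t / 2\<close> on the other atoms.
  All of these are realised by a message uniform on \<open>(\<int>/q)\<^sup>2\<close>, \<open>q \<ge> n\<close> prime, whose
  coordinates are either empty, the whole message, or Reed--Solomon symbols, any two of
  which recover the message.
\<close>

section \<open>Entropy of discrete distributions\<close>

text \<open>Entropy in bits as an \<open>ennreal\<close>-valued integral, so that it needs no summability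
  hypotheses; \<open>has_entropy_iff\<close> relates it to the series in \<open>has_entropy\<close>.\<close>

definition entropy_pmf :: "'a pmf \<Rightarrow> ennreal" where
  "entropy_pmf q = (\<integral>\<^sup>+ v. ennreal (- log 2 (pmf q v)) \<partial>measure_pmf q)"

lemma has_sum_iff_nn_integral:
  fixes f :: "'a::countable \<Rightarrow> real"
  assumes nonneg: "\<And>x. 0 \<le> f x"
  shows "(f has_sum r) UNIV \<longleftrightarrow> (\<integral>\<^sup>+x. ennreal (f x) \<partial>count_space UNIV) = ennreal r \<and> 0 \<le> r"
proof
  assume sum: "(f has_sum r) UNIV"
  then have "f summable_on UNIV"
    by (auto simp: summable_on_def)
  with nonneg have "(\<lambda>x. norm (f x)) summable_on UNIV"
    by simp
  then have abs: "Infinite_Set_Sum.abs_summable_on f UNIV"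
    using abs_summable_equivalent by blast
  have "(\<integral>\<^sup>+x. ennreal (f x) \<partial>count_space UNIV) = ennreal (infsetsum f UNIV)"
    using nn_integral_conv_infsetsum[OF abs] nonneg by auto
  also have "infsetsum f UNIV = r"
    using infsetsum_infsum[OF abs] infsumI[OF sum] by simp
  finally show "(\<integral>\<^sup>+x. ennreal (f x) \<partial>count_space UNIV) = ennreal r \<and> 0 \<le> r"
    using has_sum_nonneg[OF sum] nonneg by auto
next
  assume int: "(\<integral>\<^sup>+x. ennreal (f x) \<partial>count_space UNIV) = ennreal r \<and> 0 \<le> r"
  then have "integrable (count_space UNIV) f"
    by (intro integrableI_nonneg) (use nonneg in auto)
  then have abs: "Infinite_Set_Sum.abs_summable_on f UNIV"
    by (simp add: abs_summable_on_def)
  then have "(\<lambda>x. norm (f x)) summable_on UNIV"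
    using abs_summable_equivalent by blast
  with nonneg have "f summable_on UNIV"
    by simp
  moreover have "infsum f UNIV = r"
    using infsetsum_infsum[OF abs] infsetsum_conv_nn_integral[where f = f and A = UNIV] int nonneg by simp
  ultimately show "(f has_sum r) UNIV"
    by (metis has_sum_infsum)
qed

lemma minus_log_nonneg: "0 \<le> (x::real) \<Longrightarrow> x \<le> 1 \<Longrightarrow> 0 \<le> - log 2 x"
  by (cases "x > 0") (auto simp: log_def divide_nonpos_pos ln_le_zero_iff)

lemma log_pmf_nonpos [simp]: "log 2 (pmf q v) \<le> 0"
  using minus_log_nonneg[OF pmf_nonneg pmf_le_1] by simp

lemma has_entropy_iff:
  "has_entropy p X r \<longleftrightarrow> entropy_pmf (map_pmf X p) = ennreal r \<and> 0 \<le> r"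
proof -
  let ?q = "map_pmf X p"
  have nonneg: "0 \<le> - pmf ?q v * log 2 (pmf ?q v)" for v
    by (simp add: mult_nonneg_nonpos)
  have "(\<integral>\<^sup>+v. ennreal (- pmf ?q v * log 2 (pmf ?q v)) \<partial>count_space UNIV) = entropy_pmf ?q"
    unfolding entropy_pmf_def nn_integral_measure_pmf
    by (intro nn_integral_cong) (simp add: ennreal_mult'[symmetric])
  moreover have "has_entropy p X r \<longleftrightarrow> ((\<lambda>v. - pmf ?q v * log 2 (pmf ?q v)) has_sum r) UNIV"
    by (simp add: has_entropy_def pmf_map vimage_def)
  ultimately show ?thesis
    using has_sum_iff_nn_integral[where f = "\<lambda>v. - pmf ?q v * log 2 (pmf ?q v)", OF nonneg] by simp
qed

lemma pmf_le_pmf_map: "pmf q v \<le> pmf (map_pmf f q) (f v)"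
proof -
  have "pmf q v \<le> measure q (f -` {f v})"
    unfolding measure_pmf_single[symmetric] by (rule measure_pmf.finite_measure_mono) auto
  then show ?thesis
    by (simp add: pmf_map)
qed

lemma entropy_pmf_map_le: "entropy_pmf (map_pmf f q) \<le> entropy_pmf q"
proof -
  have "entropy_pmf (map_pmf f q) = (\<integral>\<^sup>+ v. ennreal (- log 2 (pmf (map_pmf f q) (f v))) \<partial>q)"
    unfolding entropy_pmf_def by simp
  also have "\<dots> \<le> entropy_pmf q"
    unfolding entropy_pmf_def
  proof (rule nn_integral_mono_AE)
    show "AE v in q. ennreal (- log 2 (pmf (map_pmf f q) (f v))) \<le> ennreal (- log 2 (pmf q v))"
      using AE_measure_pmf[of q]
    proof eventually_elim
      case (elim v)
      then have "log 2 (pmf q v) \<le> log 2 (pmf (map_pmf f q) (f v))"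
        using pmf_le_pmf_map[of q v f] by (simp add: pmf_positive)
      then show ?case
        by (intro ennreal_leI) simp
    qed
  qed
  finally show ?thesis .
qed

lemma ex_factor_on_iff:
  "(\<exists>f. \<forall>v\<in>S. A v = f (B v)) \<longleftrightarrow> (\<forall>v\<in>S. \<forall>v'\<in>S. B v = B v' \<longrightarrow> A v = A v')"
proof
  assume "\<forall>v\<in>S. \<forall>v'\<in>S. B v = B v' \<longrightarrow> A v = A v'"
  then have "\<forall>v\<in>S. A v = A (SOME v'. v' \<in> S \<and> B v' = B v)"
    by (metis (mono_tags, lifting) someI)
  then show "\<exists>f. \<forall>v\<in>S. A v = f (B v)"
    by (intro exI[of _ "\<lambda>b. A (SOME v'. v' \<in> S \<and> B v' = b)"])
qed auto

lemma ex_mutual_factors_on_iff: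
  "(\<exists>f g. \<forall>v\<in>S. A v = f (B v) \<and> B v = g (A v)) \<longleftrightarrow> (\<forall>v\<in>S. \<forall>v'\<in>S. A v = A v' \<longleftrightarrow> B v = B v')"
proof -
  have "(\<exists>f g. \<forall>v\<in>S. A v = f (B v) \<and> B v = g (A v))
      \<longleftrightarrow> (\<exists>f. \<forall>v\<in>S. A v = f (B v)) \<and> (\<exists>g. \<forall>v\<in>S. B v = g (A v))"
    by blast
  then show ?thesis
    unfolding ex_factor_on_iff by blast
qed

lemma entropy_pmf_map_le_if_determined:
  assumes "\<forall>v\<in>set_pmf p. \<forall>v'\<in>set_pmf p. B v = B v' \<longrightarrow> A v = A v'"
  shows "entropy_pmf (map_pmf A p) \<le> entropy_pmf (map_pmf B p)"
proof -
  obtain f where "\<forall>v\<in>set_pmf p. A v = f (B v)"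
    using assms ex_factor_on_iff by metis
  then have "map_pmf A p = map_pmf f (map_pmf B p)"
    unfolding map_pmf_comp by (intro map_pmf_cong) auto
  then show ?thesis
    using entropy_pmf_map_le by metis
qed

lemma entropy_pmf_map_inj_on:
  "inj_on f (set_pmf q) \<Longrightarrow> entropy_pmf (map_pmf f q) = entropy_pmf q"
  by (intro antisym entropy_pmf_map_le entropy_pmf_map_le_if_determined[where B = f and A = id, simplified])
     (auto dest: inj_onD)

lemma entropy_pmf_of_set:
  assumes "finite T" "T \<noteq> {}"
  shows "entropy_pmf (pmf_of_set T) = ennreal (log 2 (card T))"
proof -
  have "entropy_pmf (pmf_of_set T) = (\<integral>\<^sup>+ v. ennreal (log 2 (card T)) \<partial>pmf_of_set T)"
    unfolding entropy_pmf_def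
  proof (rule nn_integral_cong_AE)
    show "AE v in pmf_of_set T. ennreal (- log 2 (pmf (pmf_of_set T) v)) = ennreal (log 2 (card T))"
      using AE_measure_pmf[of "pmf_of_set T"]
      by eventually_elim (use assms in \<open>simp add: log_divide card_gt_0_iff\<close>)
  qed
  then show ?thesis
    by simp
qed

lemma entropy_return_pmf: "entropy_pmf (return_pmf c) = 0"
  using entropy_pmf_of_set[of "{c}"] by (simp add: pmf_of_set_singleton)

lemma entropy_pair_pmf: "entropy_pmf (pair_pmf A B) = entropy_pmf A + entropy_pmf B"
proof -
  have "entropy_pmf (pair_pmf A B) =
      (\<integral>\<^sup>+ v. ennreal (- log 2 (pmf A (fst v))) + ennreal (- log 2 (pmf B (snd v))) \<partial>pair_pmf A B)"
    unfolding entropy_pmf_def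
  proof (rule nn_integral_cong_AE)
    show "AE v in pair_pmf A B. ennreal (- log 2 (pmf (pair_pmf A B) v)) =
        ennreal (- log 2 (pmf A (fst v))) + ennreal (- log 2 (pmf B (snd v)))"
      using AE_measure_pmf[of "pair_pmf A B"]
    proof eventually_elim
      case (elim v)
      then have "pmf A (fst v) > 0" "pmf B (snd v) > 0"
        by (auto simp: pmf_positive)
      then show ?case
        by (cases v) (simp add: pmf_pair log_mult flip: ennreal_plus)
    qed
  qed
  also have "\<dots> = (\<integral>\<^sup>+ v. ennreal (- log 2 (pmf A v)) \<partial>map_pmf fst (pair_pmf A B))
      + (\<integral>\<^sup>+ v. ennreal (- log 2 (pmf B v)) \<partial>map_pmf snd (pair_pmf A B))"
    by (simp add: nn_integral_add)
  finally show ?thesis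
    unfolding entropy_pmf_def map_fst_pair_pmf map_snd_pair_pmf .
qed

definition binary_entropy :: "real \<Rightarrow> real" where
  "binary_entropy e = - e * log 2 e - (1 - e) * log 2 (1 - e)"

lemma binary_entropy_eq: "binary_entropy e = e * - log 2 e + (1 - e) * - log 2 (1 - e)"
  by (simp add: binary_entropy_def)

lemma binary_entropy_nonneg: "0 \<le> e \<Longrightarrow> e \<le> 1 \<Longrightarrow> 0 \<le> binary_entropy e"
  unfolding binary_entropy_eq by (intro add_nonneg_nonneg mult_nonneg_nonneg minus_log_nonneg) auto

definition mix_zero_pmf :: "real \<Rightarrow> nat pmf \<Rightarrow> nat pmf" where
  "mix_zero_pmf e q = bind_pmf (bernoulli_pmf e) (\<lambda>b. if b then map_pmf Suc q else return_pmf 0)"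

lemma pmf_mix_zero_pmf:
  assumes "0 \<le> e" "e \<le> 1"
  shows "pmf (mix_zero_pmf e q) 0 = 1 - e" "pmf (mix_zero_pmf e q) (Suc v) = e * pmf q v"
proof -
  have "pmf (map_pmf Suc q) 0 = 0"
    by (simp add: pmf_map vimage_def)
  then show "pmf (mix_zero_pmf e q) 0 = 1 - e"
    unfolding mix_zero_pmf_def pmf_bind using assms by simp
  have "pmf (map_pmf Suc q) (Suc v) = pmf q v"
    by (rule pmf_map_inj') simp
  then show "pmf (mix_zero_pmf e q) (Suc v) = e * pmf q v"
    unfolding mix_zero_pmf_def pmf_bind using assms by simp
qed

lemma entropy_mix_zero_pmf:
  assumes e: "0 < e" "e \<le> 1"
  shows "entropy_pmf (mix_zero_pmf e q) = ennreal (binary_entropy e) + ennreal e * entropy_pmf q"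
proof -
  define F where "F u = ennreal (- log 2 (pmf (mix_zero_pmf e q) u))" for u
  have logs: "0 \<le> - log 2 e" "0 \<le> - log 2 (1 - e)"
    using e minus_log_nonneg[of e] minus_log_nonneg[of "1 - e"] by auto
  have "entropy_pmf (mix_zero_pmf e q) =
      (\<integral>\<^sup>+ b. (\<integral>\<^sup>+ u. F u \<partial>(if b then map_pmf Suc q else return_pmf 0)) \<partial>bernoulli_pmf e)"
    unfolding entropy_pmf_def F_def by (simp add: mix_zero_pmf_def[of e q])
  also have "\<dots> = (\<integral>\<^sup>+ u. F u \<partial>map_pmf Suc q) * ennreal e + F 0 * ennreal (1 - e)"
    using e by (subst nn_integral_bernoulli_pmf) auto
  also have "(\<integral>\<^sup>+ u. F u \<partial>map_pmf Suc q) = (\<integral>\<^sup>+ v. ennreal (- log 2 e) + ennreal (- log 2 (pmf q v)) \<partial>q)"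
    unfolding nn_integral_map_pmf
  proof (rule nn_integral_cong_AE)
    show "AE v in q. F (Suc v) = ennreal (- log 2 e) + ennreal (- log 2 (pmf q v))"
      using AE_measure_pmf[of q]
    proof eventually_elim
      case (elim v)
      then have "0 < pmf q v"
        by (simp add: pmf_positive)
      then show ?case
        unfolding F_def using e logs
        by (simp add: pmf_mix_zero_pmf log_mult flip: ennreal_plus)
    qed
  qed
  also have "\<dots> = ennreal (- log 2 e) + entropy_pmf q"
    unfolding entropy_pmf_def by (simp add: nn_integral_add)
  also have "F 0 = ennreal (- log 2 (1 - e))"
    unfolding F_def using e by (simp add: pmf_mix_zero_pmf)
  also have "ennreal (binary_entropy e) = ennreal e * ennreal (- log 2 e) + ennreal (1 - e) * ennreal (- log 2 (1 - e))"
    unfolding binary_entropy_eq using e logs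
    using ennreal_mult[of e "- log 2 e"] ennreal_mult[of "1 - e" "- log 2 (1 - e)"]
    by (subst ennreal_plus) (auto simp: mult_nonneg_nonpos)
  ultimately show ?thesis
    by (simp add: algebra_simps)
qed

lemma minus_log_ratio_bound:
  assumes "0 < a" "0 < b" "0 < c" "0 < d" "a \<le> 1" "b \<le> 1" "c \<le> 1" "d \<le> 1"
  shows "ennreal (- log 2 c) + ennreal (- log 2 d) + ennreal (1 / ln 2)
    \<le> ennreal (- log 2 a) + ennreal (- log 2 b) + ennreal (1 / ln 2) * ennreal (a * b / (c * d))"
proof -
  have lift: "ennreal x1 + ennreal x2 + ennreal k \<le> ennreal y1 + ennreal y2 + ennreal k * ennreal r"
    if "0 \<le> x1" "0 \<le> x2" "0 \<le> y1" "0 \<le> y2" "0 \<le> k" "0 \<le> r" "x1 + x2 + k \<le> y1 + y2 + k * r"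
    for x1 x2 y1 y2 k r :: real
    using that by (simp add: ennreal_leI flip: ennreal_plus ennreal_mult)
  let ?t = "a * b / (c * d)"
  have "ln ?t \<le> ?t - 1"
    using assms by (intro ln_le_minus_one) simp
  then have "log 2 ?t \<le> (?t - 1) / ln 2"
    by (simp add: log_def divide_right_mono)
  moreover have "(?t - 1) / ln 2 = 1 / ln 2 * ?t - 1 / ln 2"
    by (simp add: diff_divide_distrib)
  moreover have "log 2 ?t = log 2 a + log 2 b - log 2 c - log 2 d"
    using assms by (simp add: log_divide log_mult)
  ultimately have "- log 2 c + - log 2 d + 1 / ln 2 \<le> - log 2 a + - log 2 b + 1 / ln 2 * ?t"
    by argo
  then show ?thesis
    using assms minus_log_nonneg[of a] minus_log_nonneg[of b] minus_log_nonneg[of c] minus_log_nonneg[of d]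
    by (intro lift) auto
qed

lemma nn_integral_pair_pmf_common_value_le_1:
  assumes "map_pmf g Y = Z"
  shows "(\<integral>\<^sup>+v. (if f (fst v) = g (snd v) then ennreal (1 / pmf Z (f (fst v))) else 0) \<partial>pair_pmf X Y) \<le> 1"
proof -
  have inner: "(\<integral>\<^sup>+y. (if f x = g y then ennreal (1 / pmf Z (f x)) else 0) \<partial>Y) \<le> 1" for x
  proof -
    have "(\<integral>\<^sup>+y. (if f x = g y then ennreal (1 / pmf Z (f x)) else 0) \<partial>Y)
        = (\<integral>\<^sup>+z. ennreal (1 / pmf Z (f x)) * indicator {f x} z \<partial>Z)"
      unfolding assms[symmetric] by (auto intro!: nn_integral_cong simp: indicator_def)
    also have "\<dots> = ennreal (1 / pmf Z (f x)) * ennreal (pmf Z (f x))"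
      by (simp add: nn_integral_cmult_indicator emeasure_pmf_single)
    also have "\<dots> \<le> 1"
      by (cases "pmf Z (f x) = 0") (auto simp: ennreal_mult[symmetric])
    finally show ?thesis .
  qed
  have "(\<integral>\<^sup>+v. (if f (fst v) = g (snd v) then ennreal (1 / pmf Z (f (fst v))) else 0) \<partial>pair_pmf X Y)
      = (\<integral>\<^sup>+x. \<integral>\<^sup>+y. (if f x = g y then ennreal (1 / pmf Z (f x)) else 0) \<partial>Y \<partial>X)"
    by (simp add: nn_integral_pair_pmf' cong: if_cong)
  also have "\<dots> \<le> (\<integral>\<^sup>+x. 1 \<partial>X)"
    using inner by (intro nn_integral_mono)
  finally show ?thesis
    by simp
qed

lemma nn_integral_common_value_weight_le_1:
  fixes J :: "('a \<times> 'b) pmf" and f :: "'a \<Rightarrow> 'c" and g :: "'b \<Rightarrow> 'c"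
  defines "X \<equiv> map_pmf fst J" and "Y \<equiv> map_pmf snd J" and "Z \<equiv> map_pmf (\<lambda>v. f (fst v)) J"
  assumes common: "\<And>v. v \<in> set_pmf J \<Longrightarrow> f (fst v) = g (snd v)"
  shows "(\<integral>\<^sup>+v. ennreal (pmf X (fst v) * pmf Y (snd v) / (pmf J v * pmf Z (f (fst v)))) \<partial>J) \<le> 1"
proof -
  have "map_pmf g Y = Z"
    unfolding Y_def Z_def map_pmf_comp using common by (intro map_pmf_cong) auto
  then have "(\<integral>\<^sup>+v. (if f (fst v) = g (snd v) then ennreal (1 / pmf Z (f (fst v))) else 0) \<partial>pair_pmf X Y) \<le> 1"
    by (rule nn_integral_pair_pmf_common_value_le_1)
  moreover have "(\<integral>\<^sup>+v. ennreal (pmf X (fst v) * pmf Y (snd v) / (pmf J v * pmf Z (f (fst v)))) \<partial>J) \<le>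
      (\<integral>\<^sup>+v. (if f (fst v) = g (snd v) then ennreal (1 / pmf Z (f (fst v))) else 0) \<partial>pair_pmf X Y)"
    unfolding nn_integral_measure_pmf[of J] nn_integral_measure_pmf[of "pair_pmf X Y"]
  proof (intro nn_integral_mono)
    fix v
    show "ennreal (pmf J v) * ennreal (pmf X (fst v) * pmf Y (snd v) / (pmf J v * pmf Z (f (fst v))))
        \<le> ennreal (pmf (pair_pmf X Y) v) * (if f (fst v) = g (snd v) then ennreal (1 / pmf Z (f (fst v))) else 0)"
    proof (cases "v \<in> set_pmf J")
      case True
      then have "0 < pmf J v" "pmf J v \<le> pmf Z (f (fst v))"
        using pmf_le_pmf_map[of J v "\<lambda>v. f (fst v)"] by (auto simp: Z_def pmf_positive)
      then show ?thesis
        using common[OF True] by (cases v) (simp add: pmf_pair flip: ennreal_mult)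
    qed (simp add: set_pmf_iff)
  qed
  ultimately show ?thesis
    by (rule order_trans[rotated])
qed

text \<open>Gibbs' inequality for the joint distribution of \<open>(X, Y)\<close> against the weight
  \<open>p(x) p(y) / p(z)\<close>, where \<open>z\<close> is the common value.\<close>

lemma entropy_pmf_common_function:
  fixes J :: "('a \<times> 'b) pmf"
  assumes common: "\<And>v. v \<in> set_pmf J \<Longrightarrow> f (fst v) = g (snd v)"
  shows "entropy_pmf J + entropy_pmf (map_pmf (\<lambda>v. f (fst v)) J)
    \<le> entropy_pmf (map_pmf fst J) + entropy_pmf (map_pmf snd J)"
proof -
  define X Y Z where "X = map_pmf fst J" and "Y = map_pmf snd J" and "Z = map_pmf (\<lambda>v. f (fst v)) J"
  define w where "w v = pmf X (fst v) * pmf Y (snd v) / (pmf J v * pmf Z (f (fst v)))" for v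
  define K :: ennreal where "K = ennreal (1 / ln 2)"
  have weight: "(\<integral>\<^sup>+v. ennreal (w v) \<partial>J) \<le> 1"
    unfolding w_def X_def Y_def Z_def by (rule nn_integral_common_value_weight_le_1[where f = f and g = g, OF common])
  have pointwise: "ennreal (- log 2 (pmf J v)) + ennreal (- log 2 (pmf Z (f (fst v)))) + K
      \<le> ennreal (- log 2 (pmf X (fst v))) + ennreal (- log 2 (pmf Y (snd v))) + K * ennreal (w v)"
    if "v \<in> set_pmf J" for v
    using that pmf_le_pmf_map[of J v fst] pmf_le_pmf_map[of J v snd] pmf_le_pmf_map[of J v "\<lambda>v. f (fst v)"]
    unfolding K_def w_def
    by (intro minus_log_ratio_bound) (auto simp: X_def Y_def Z_def pmf_positive pmf_le_1)
  have "entropy_pmf J + entropy_pmf Z + K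
      = (\<integral>\<^sup>+v. ennreal (- log 2 (pmf J v)) + ennreal (- log 2 (pmf Z (f (fst v)))) + K \<partial>J)"
    by (simp add: nn_integral_add entropy_pmf_def Z_def)
  also have "\<dots> \<le> (\<integral>\<^sup>+v. ennreal (- log 2 (pmf X (fst v))) + ennreal (- log 2 (pmf Y (snd v)))
      + K * ennreal (w v) \<partial>J)"
    using pointwise by (intro nn_integral_mono_AE) (simp add: AE_measure_pmf_iff)
  also have "\<dots> = entropy_pmf X + entropy_pmf Y + K * (\<integral>\<^sup>+v. ennreal (w v) \<partial>J)"
    by (simp add: nn_integral_add nn_integral_cmult entropy_pmf_def X_def Y_def)
  also have "\<dots> \<le> entropy_pmf X + entropy_pmf Y + K"
    using weight by (intro add_left_mono) (metis mult.right_neutral mult_left_mono zero_le)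
  finally show ?thesis
    unfolding X_def Y_def Z_def K_def by (simp add: ennreal_add_left_cancel_le add.commute)
qed

lemma entropy_pmf_map_eq_if_equivalent:
  assumes "\<forall>v\<in>set_pmf p. \<forall>v'\<in>set_pmf p. A v = A v' \<longleftrightarrow> B v = B v'"
  shows "entropy_pmf (map_pmf A p) = entropy_pmf (map_pmf B p)"
  using assms by (intro antisym entropy_pmf_map_le_if_determined) auto

lemma entropy_pmf_common_information:
  assumes "\<forall>w\<in>set_pmf p. \<forall>w'\<in>set_pmf p. X w = X w' \<longrightarrow> Z w = Z w'"
    and "\<forall>w\<in>set_pmf p. \<forall>w'\<in>set_pmf p. Y w = Y w' \<longrightarrow> Z w = Z w'"
  shows "entropy_pmf (map_pmf (\<lambda>w. (X w, Y w)) p) + entropy_pmf (map_pmf Z p)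
    \<le> entropy_pmf (map_pmf X p) + entropy_pmf (map_pmf Y p)"
proof -
  obtain f where f: "\<forall>w\<in>set_pmf p. Z w = f (X w)"
    using assms(1) unfolding ex_factor_on_iff[symmetric] by blast
  obtain g where g: "\<forall>w\<in>set_pmf p. Z w = g (Y w)"
    using assms(2) unfolding ex_factor_on_iff[symmetric] by blast
  define J where "J = map_pmf (\<lambda>w. (X w, Y w)) p"
  have "entropy_pmf J + entropy_pmf (map_pmf (\<lambda>v. f (fst v)) J)
      \<le> entropy_pmf (map_pmf fst J) + entropy_pmf (map_pmf snd J)"
  proof (rule entropy_pmf_common_function)
    fix v
    assume "v \<in> set_pmf J"
    then obtain w where "w \<in> set_pmf p" "v = (X w, Y w)"
      by (auto simp: J_def)
    then show "f (fst v) = g (snd v)"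
      using f g by force
  qed
  moreover have "map_pmf (\<lambda>v. f (fst v)) J = map_pmf Z p"
    unfolding J_def map_pmf_comp using f by (intro map_pmf_cong) auto
  ultimately show ?thesis
    by (simp add: J_def map_pmf_comp)
qed

section \<open>Entropic functions on \<open>M\<^sub>n\<close> are polymatroids\<close>

abbreviation Mn_atoms :: "nat \<Rightarrow> nat set" where
  "Mn_atoms n \<equiv> Mn_carrier n - {0, 1}"

lemma Mn_join_in_carrier: "x \<in> Mn_carrier n \<Longrightarrow> y \<in> Mn_carrier n \<Longrightarrow> Mn_join x y \<in> Mn_carrier n"
  by (auto simp: Mn_join_def Mn_carrier_def)

lemma Mn_meet_in_carrier: "x \<in> Mn_carrier n \<Longrightarrow> y \<in> Mn_carrier n \<Longrightarrow> Mn_meet x y \<in> Mn_carrier n"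
  by (auto simp: Mn_meet_def Mn_carrier_def)

text \<open>Two variables are functions of each other almost surely iff they induce the same
  partition of the support.\<close>

definition join_determined :: "nat \<Rightarrow> (nat \<Rightarrow> nat) pmf \<Rightarrow> bool" where
  "join_determined n p \<longleftrightarrow> (\<forall>x\<in>Mn_carrier n. \<forall>y\<in>Mn_carrier n. \<forall>w\<in>set_pmf p. \<forall>w'\<in>set_pmf p.
     w (Mn_join x y) = w' (Mn_join x y) \<longleftrightarrow> w x = w' x \<and> w y = w' y)"

lemma join_determinedD:
  "join_determined n p \<Longrightarrow> x \<in> Mn_carrier n \<Longrightarrow> y \<in> Mn_carrier n \<Longrightarrow> w \<in> set_pmf p \<Longrightarrow> w' \<in> set_pmf p \<Longrightarrow>
    w (Mn_join x y) = w' (Mn_join x y) \<longleftrightarrow> w x = w' x \<and> w y = w' y"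
  unfolding join_determined_def by blast

abbreviation coord_entropy :: "(nat \<Rightarrow> nat) pmf \<Rightarrow> nat \<Rightarrow> ennreal" where
  "coord_entropy p x \<equiv> entropy_pmf (map_pmf (\<lambda>w. w x) p)"

lemma entropic_iff:
  "entropic n h \<longleftrightarrow>
    (\<exists>p. join_determined n p \<and> (\<forall>x\<in>Mn_carrier n. 0 \<le> h x \<and> coord_entropy p x = ennreal (h x)))"
proof -
  have "(\<exists>f g. \<forall>w\<in>set_pmf p. w (Mn_join x y) = f (w x, w y) \<and> (w x, w y) = g (w (Mn_join x y)))
      \<longleftrightarrow> (\<forall>w\<in>set_pmf p. \<forall>w'\<in>set_pmf p. w (Mn_join x y) = w' (Mn_join x y) \<longleftrightarrow> w x = w' x \<and> w y = w' y)"
    for p :: "(nat \<Rightarrow> nat) pmf" and x y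
    using ex_mutual_factors_on_iff[of "set_pmf p" "\<lambda>w. w (Mn_join x y)" "\<lambda>w. (w x, w y)"] by simp
  then show ?thesis
    unfolding entropic_def join_determined_def has_entropy_iff by (auto simp: conj_commute)
qed

lemma coord_entropy_mono:
  assumes "join_determined n p" "x \<in> Mn_carrier n" "y \<in> Mn_carrier n" "Mn_le y x"
  shows "coord_entropy p y \<le> coord_entropy p x"
proof (rule entropy_pmf_map_le_if_determined)
  have "Mn_join y x = x"
    using assms(4) by (auto simp: Mn_le_def Mn_join_def)
  then show "\<forall>w\<in>set_pmf p. \<forall>w'\<in>set_pmf p. w x = w' x \<longrightarrow> w y = w' y"
    using join_determinedD[OF assms(1,3,2)] by metis
qed

lemma coord_entropy_submodular:
  assumes p: "join_determined n p" and x: "x \<in> Mn_carrier n" and y: "y \<in> Mn_carrier n"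
  shows "coord_entropy p (Mn_join x y) + coord_entropy p (Mn_meet x y) \<le> coord_entropy p x + coord_entropy p y"
proof (cases "x = y \<or> x \<in> {0, 1} \<or> y \<in> {0, 1}")
  case True
  then have "Mn_join x y = x \<and> Mn_meet x y = y \<or> Mn_join x y = y \<and> Mn_meet x y = x"
    by (auto simp: Mn_join_def Mn_meet_def)
  then show ?thesis
    by (auto simp: add.commute)
next
  case False
  then have "Mn_join x y = 1" "Mn_meet x y = 0"
    by (auto simp: Mn_join_def Mn_meet_def)
  have "0 \<in> Mn_carrier n"
    using x by (simp add: Mn_carrier_def)
  have "Mn_join 0 x = x" "Mn_join 0 y = y"
    by (simp_all add: Mn_join_def)
  then have "\<forall>w\<in>set_pmf p. \<forall>w'\<in>set_pmf p. w x = w' x \<longrightarrow> w 0 = w' 0"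
    "\<forall>w\<in>set_pmf p. \<forall>w'\<in>set_pmf p. w y = w' y \<longrightarrow> w 0 = w' 0"
    using join_determinedD[OF p \<open>0 \<in> Mn_carrier n\<close> x] join_determinedD[OF p \<open>0 \<in> Mn_carrier n\<close> y]
    by metis+
  then have "entropy_pmf (map_pmf (\<lambda>w. (w x, w y)) p) + coord_entropy p 0 \<le> coord_entropy p x + coord_entropy p y"
    by (rule entropy_pmf_common_information)
  moreover have "coord_entropy p 1 = entropy_pmf (map_pmf (\<lambda>w. (w x, w y)) p)"
    using join_determinedD[OF p x y] \<open>Mn_join x y = 1\<close> by (intro entropy_pmf_map_eq_if_equivalent) simp
  ultimately show ?thesis
    using \<open>Mn_join x y = 1\<close> \<open>Mn_meet x y = 0\<close> by simp
qed

lemma polymatroid_if_entropic: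
  assumes "entropic n h"
  shows "polymatroid n h"
proof -
  obtain p where p: "join_determined n p"
    and h: "\<And>x. x \<in> Mn_carrier n \<Longrightarrow> 0 \<le> h x \<and> coord_entropy p x = ennreal (h x)"
    using assms unfolding entropic_iff by blast
  show ?thesis
    unfolding polymatroid_def
  proof (intro conjI ballI impI)
    fix x y
    assume x: "x \<in> Mn_carrier n" and y: "y \<in> Mn_carrier n"
    show "0 \<le> h x"
      using h x by blast
    show "h y \<le> h x" if "Mn_le y x"
      using coord_entropy_mono[OF p x y that] h[OF x] h[OF y] by (simp add: ennreal_le_iff)
    show "h (Mn_join x y) + h (Mn_meet x y) \<le> h x + h y"
      using coord_entropy_submodular[OF p x y] h x y Mn_join_in_carrier[OF x y] Mn_meet_in_carrier[OF x y]
      by (simp add: ennreal_le_iff flip: ennreal_plus)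
  qed
qed

lemma polymatroid_if_entropic_closure:
  assumes "entropic_closure n h"
  shows "polymatroid n h"
proof -
  obtain hs where poly: "\<And>k. polymatroid n (hs k)"
    and lim: "\<And>x. x \<in> Mn_carrier n \<Longrightarrow> (\<lambda>k. hs k x) \<longlonglongrightarrow> h x"
    using assms polymatroid_if_entropic unfolding entropic_closure_def by blast
  show ?thesis
    unfolding polymatroid_def
  proof (intro conjI ballI impI)
    fix x y
    assume x: "x \<in> Mn_carrier n" and y: "y \<in> Mn_carrier n"
    show "0 \<le> h x"
      using poly x by (intro LIMSEQ_le_const[OF lim[OF x]]) (auto simp: polymatroid_def)
    show "h y \<le> h x" if "Mn_le y x"
      using poly x y that by (intro LIMSEQ_le[OF lim[OF y] lim[OF x]]) (auto simp: polymatroid_def)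
    have "(\<lambda>k. hs k (Mn_join x y) + hs k (Mn_meet x y)) \<longlonglongrightarrow> h (Mn_join x y) + h (Mn_meet x y)"
      using x y by (intro tendsto_add lim Mn_join_in_carrier Mn_meet_in_carrier)
    moreover have "(\<lambda>k. hs k x + hs k y) \<longlonglongrightarrow> h x + h y"
      using x y by (intro tendsto_add lim)
    ultimately show "h (Mn_join x y) + h (Mn_meet x y) \<le> h x + h y"
      using poly x y by (intro LIMSEQ_le) (auto simp: polymatroid_def)
  qed
qed

section \<open>The closure of the entropic functions is a convex cone\<close>

lemma entropic_zero: "entropic n (\<lambda>x. 0)"
  unfolding entropic_iff join_determined_def
  by (intro exI[of _ "return_pmf (\<lambda>_. 0)"]) (simp add: entropy_return_pmf)

lemma entropic_one: "entropic n (\<lambda>x. 1)"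
  unfolding entropic_iff
proof (intro exI conjI)
  let ?p = "map_pmf (\<lambda>b x. b) (pmf_of_set {0, 1 :: nat})"
  show "join_determined n ?p"
    unfolding join_determined_def by auto
  show "\<forall>x\<in>Mn_carrier n. 0 \<le> (1::real) \<and> coord_entropy ?p x = ennreal 1"
    by (simp add: map_pmf_comp entropy_pmf_of_set)
qed

lemma entropic_add:
  assumes "entropic n h1" "entropic n h2"
  shows "entropic n (\<lambda>x. h1 x + h2 x)"
proof -
  obtain p1 where p1: "join_determined n p1"
    and h1: "\<And>x. x \<in> Mn_carrier n \<Longrightarrow> 0 \<le> h1 x \<and> coord_entropy p1 x = ennreal (h1 x)"
    using assms(1) unfolding entropic_iff by blast
  obtain p2 where p2: "join_determined n p2"
    and h2: "\<And>x. x \<in> Mn_carrier n \<Longrightarrow> 0 \<le> h2 x \<and> coord_entropy p2 x = ennreal (h2 x)"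
    using assms(2) unfolding entropic_iff by blast
  \<comment> \<open>independent realisations, paired coordinatewise by \<open>prod_encode\<close> to stay in \<open>nat\<close>\<close>
  define p where "p = map_pmf (\<lambda>(w1, w2) x. prod_encode (w1 x, w2 x)) (pair_pmf p1 p2)"
  have "join_determined n p"
    using p1 p2 by (auto simp: join_determined_def p_def prod_encode_eq)
  moreover have "coord_entropy p x = ennreal (h1 x + h2 x)" if "x \<in> Mn_carrier n" for x
  proof -
    have "map_pmf (\<lambda>w. w x) p =
        map_pmf prod_encode (pair_pmf (map_pmf (\<lambda>w. w x) p1) (map_pmf (\<lambda>w. w x) p2))"
      unfolding p_def map_pmf_comp map_pair[symmetric] by (simp add: case_prod_beta)
    then show ?thesis
      using h1[OF that] h2[OF that]
      by (simp add: entropy_pmf_map_inj_on inj_prod_encode entropy_pair_pmf)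
  qed
  ultimately show ?thesis
    unfolding entropic_iff using h1 h2 by (intro exI[of _ p]) auto
qed

lemma entropic_scale_nat:
  assumes "entropic n h"
  shows "entropic n (\<lambda>x. real N * h x)"
proof (induction N)
  case 0
  then show ?case
    using entropic_zero by simp
next
  case (Suc N)
  then have "entropic n (\<lambda>x. real N * h x + h x)"
    using entropic_add assms by blast
  then show ?case
    by (simp add: algebra_simps)
qed

lemma entropic_mix_zero:
  assumes "entropic n h" and e: "0 < e" "e \<le> 1"
  shows "entropic n (\<lambda>x. binary_entropy e + e * h x)"
proof -
  obtain p where p: "join_determined n p"
    and h: "\<And>x. x \<in> Mn_carrier n \<Longrightarrow> 0 \<le> h x \<and> coord_entropy p x = ennreal (h x)"
    using assms(1) unfolding entropic_iff by blast
  define p' where "p' = bind_pmf (bernoulli_pmf e)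
      (\<lambda>b. if b then map_pmf (\<lambda>w x. Suc (w x)) p else return_pmf (\<lambda>x. 0))"
  have support: "w = (\<lambda>x. 0) \<or> (\<exists>w0\<in>set_pmf p. w = (\<lambda>x. Suc (w0 x)))" if "w \<in> set_pmf p'" for w
    using that unfolding p'_def by (auto split: if_splits)
  have "join_determined n p'"
    unfolding join_determined_def
  proof (intro ballI)
    fix x y w w'
    assume "x \<in> Mn_carrier n" "y \<in> Mn_carrier n" "w \<in> set_pmf p'" "w' \<in> set_pmf p'"
    then show "w (Mn_join x y) = w' (Mn_join x y) \<longleftrightarrow> w x = w' x \<and> w y = w' y"
      using support[of w] support[of w'] join_determinedD[OF p] by auto
  qed
  moreover have "coord_entropy p' x = ennreal (binary_entropy e + e * h x)" if "x \<in> Mn_carrier n" for x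
  proof -
    have "map_pmf (\<lambda>w. w x) p' = mix_zero_pmf e (map_pmf (\<lambda>w. w x) p)"
      unfolding p'_def mix_zero_pmf_def map_bind_pmf by (intro bind_pmf_cong) (simp_all add: map_pmf_comp)
    then show ?thesis
      using h[OF that] e binary_entropy_nonneg[of e]
      by (simp add: entropy_mix_zero_pmf ennreal_mult ennreal_plus)
  qed
  ultimately show ?thesis
    unfolding entropic_iff using h e binary_entropy_nonneg[of e] by (intro exI[of _ p']) auto
qed

lemma entropic_closure_add:
  assumes "entropic_closure n h1" "entropic_closure n h2"
  shows "entropic_closure n (\<lambda>x. h1 x + h2 x)"
proof -
  obtain hs1 where "\<forall>k. entropic n (hs1 k)" "\<forall>x\<in>Mn_carrier n. (\<lambda>k. hs1 k x) \<longlonglongrightarrow> h1 x"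
    using assms(1) unfolding entropic_closure_def by blast
  moreover obtain hs2 where "\<forall>k. entropic n (hs2 k)" "\<forall>x\<in>Mn_carrier n. (\<lambda>k. hs2 k x) \<longlonglongrightarrow> h2 x"
    using assms(2) unfolding entropic_closure_def by blast
  ultimately show ?thesis
    unfolding entropic_closure_def
    by (intro exI[of _ "\<lambda>k x. hs1 k x + hs2 k x"]) (auto intro: entropic_add tendsto_add)
qed

lemma entropic_closure_cong:
  "entropic_closure n h \<Longrightarrow> (\<And>x. x \<in> Mn_carrier n \<Longrightarrow> h x = h' x) \<Longrightarrow> entropic_closure n h'"
  unfolding entropic_closure_def by auto

lemma entropic_closure_if_diff:
  assumes "entropic_closure n (\<lambda>x. h x - g x)" "entropic_closure n g"
  shows "entropic_closure n h"
  using entropic_closure_add[OF assms] by (rule entropic_closure_cong) simp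

text \<open>\<open>t h\<close> is the limit of the entropic functions \<open>H(e\<^sub>k) + e\<^sub>k N\<^sub>k h\<close> with
  \<open>e\<^sub>k = t / N\<^sub>k \<rightarrow> 0\<close>, since the binary entropy vanishes at \<open>0\<close>.\<close>

lemma entropic_closure_scale:
  assumes "entropic n h" "0 \<le> t"
  shows "entropic_closure n (\<lambda>x. t * h x)"
proof (cases "t = 0")
  case True
  then show ?thesis
    unfolding entropic_closure_def using entropic_zero by (intro exI[of _ "\<lambda>k x. 0"]) auto
next
  case False
  define N where "N k = k + nat \<lceil>t\<rceil> + 1" for k
  define e where "e k = t / real (N k)" for k
  have e: "0 < e k" "e k \<le> 1" "e k * real (N k) = t" for k
  proof -
    have "0 < t" "t < real (N k)"
      using \<open>0 \<le> t\<close> \<open>t \<noteq> 0\<close> unfolding N_def by linarith+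
    then show "0 < e k" "e k \<le> 1" "e k * real (N k) = t"
      unfolding e_def by (auto simp: field_simps)
  qed
  have "(e \<longlongrightarrow> 0) sequentially"
    unfolding e_def N_def by real_asymp
  with e(1) have "filterlim e (at_right 0) sequentially"
    by (auto simp: filterlim_at less_imp_neq[symmetric])
  moreover have "(binary_entropy \<longlongrightarrow> 0) (at_right 0)"
    unfolding binary_entropy_def log_def by real_asymp
  ultimately have "(\<lambda>k. binary_entropy (e k)) \<longlonglongrightarrow> 0"
    by (rule filterlim_compose[rotated])
  then have "(\<lambda>k. binary_entropy (e k) + e k * (real (N k) * h x)) \<longlonglongrightarrow> 0 + t * h x" for x
    by (intro tendsto_add) (simp_all add: mult.assoc[symmetric] e(3))
  moreover have "entropic n (\<lambda>x. binary_entropy (e k) + e k * (real (N k) * h x))" for k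
    using entropic_mix_zero[OF entropic_scale_nat[OF assms(1)] e(1,2)] .
  ultimately show ?thesis
    unfolding entropic_closure_def by (intro exI[of _ "\<lambda>k x. binary_entropy (e k) + e k * (real (N k) * h x)"]) auto
qed

section \<open>Entropic functions from Reed--Solomon codes\<close>

lemma eq_if_int_dvd_diff:
  fixes x y q :: nat
  assumes "int q dvd int x - int y" "x < q" "y < q"
  shows "x = y"
proof (rule ccontr)
  assume "x \<noteq> y"
  then have "int q \<le> \<bar>int x - int y\<bar>"
    using dvd_imp_le_int[OF _ assms(1)] by simp
  with assms(2,3) show False
    by linarith
qed

lemma mod_eq_imp_int_dvd_diff:
  fixes x y q :: nat
  shows "x mod q = y mod q \<Longrightarrow> int q dvd int x - int y"
  by (metis mod_eq_dvd_iff of_nat_mod)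

lemma add_mult_base_inj:
  fixes a b a' b' q :: nat
  assumes "a < q" "a' < q" "a + q * b = a' + q * b'"
  shows "a = a' \<and> b = b'"
proof -
  have "a = a'"
    using arg_cong[OF assms(3), of "\<lambda>m. m mod q"] assms(1,2) by simp
  with assms show ?thesis
    by simp
qed

lemma linear_mod_pair_inj:
  fixes q i j a b a' b' :: nat
  assumes q: "prime q" and ij: "i < q" "j < q" "i \<noteq> j"
    and ab: "a < q" "a' < q" "b < q" "b' < q"
    and i: "(a + i * b) mod q = (a' + i * b') mod q"
    and j: "(a + j * b) mod q = (a' + j * b') mod q"
  shows "a = a' \<and> b = b'"
proof -
  have di: "int q dvd (int a - int a') + int i * (int b - int b')"
    using mod_eq_imp_int_dvd_diff[OF i] by (simp add: algebra_simps)
  have dj: "int q dvd (int a - int a') + int j * (int b - int b')"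
    using mod_eq_imp_int_dvd_diff[OF j] by (simp add: algebra_simps)
  have "int q dvd (int i - int j) * (int b - int b')"
    using dvd_diff[OF di dj] by (simp add: algebra_simps)
  moreover have "\<not> int q dvd int i - int j"
    using eq_if_int_dvd_diff ij by blast
  ultimately have "int q dvd int b - int b'"
    using q by (simp add: prime_dvd_mult_iff)
  then have "b = b'"
    using eq_if_int_dvd_diff ab by blast
  with di have "a = a'"
    using eq_if_int_dvd_diff ab by simp
  with \<open>b = b'\<close> show ?thesis
    by simp
qed

lemma map_pmf_add_mod_uniform:
  fixes q c :: nat
  assumes "0 < q"
  shows "map_pmf (\<lambda>a. (a + c) mod q) (pmf_of_set {..<q}) = pmf_of_set {..<q}"
proof -
  have inj: "inj_on (\<lambda>a. (a + c) mod q) {..<q}"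
  proof (rule inj_onI)
    fix a a' :: nat
    assume "a \<in> {..<q}" "a' \<in> {..<q}" "(a + c) mod q = (a' + c) mod q"
    then show "a = a'"
      using mod_eq_imp_int_dvd_diff[of "a + c" q "a' + c"] eq_if_int_dvd_diff[of q a a'] by simp
  qed
  then have "(\<lambda>a. (a + c) mod q) ` {..<q} = {..<q}"
    using assms by (intro endo_inj_surj) auto
  with inj assms show ?thesis
    by (simp add: map_pmf_of_set_inj lessThan_empty_iff)
qed

definition message_pmf :: "nat \<Rightarrow> (nat \<times> nat) pmf" where
  "message_pmf q = pair_pmf (pmf_of_set {..<q}) (pmf_of_set {..<q})"

lemma set_message_pmf: "0 < q \<Longrightarrow> set_pmf (message_pmf q) = {..<q} \<times> {..<q}"
  by (simp add: message_pmf_def lessThan_empty_iff)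

lemma entropy_message_pmf: "0 < q \<Longrightarrow> entropy_pmf (message_pmf q) = ennreal (2 * log 2 q)"
  by (simp add: message_pmf_def entropy_pair_pmf entropy_pmf_of_set lessThan_empty_iff flip: ennreal_plus)

lemma map_message_pmf_linear_mod:
  fixes q x :: nat
  assumes "0 < q"
  shows "map_pmf (\<lambda>v. (fst v + x * snd v) mod q) (message_pmf q) = pmf_of_set {..<q}"
proof -
  let ?U = "pmf_of_set {..<q}"
  have "map_pmf (\<lambda>v. (fst v + x * snd v) mod q) (message_pmf q)
      = bind_pmf ?U (\<lambda>b. map_pmf (\<lambda>a. (a + x * b) mod q) ?U)"
    unfolding message_pmf_def
    by (subst pair_commute_pmf)
       (simp add: pair_pmf_def map_bind_pmf map_pmf_def[symmetric] map_pmf_comp bind_return_pmf)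
  also have "\<dots> = ?U"
    using map_pmf_add_mod_uniform[OF assms] by simp
  finally show ?thesis .
qed

text \<open>The symbol at coordinate \<open>x\<close> of a codeword for the message \<open>v = (a, b) \<in> {..<q}\<^sup>2\<close>:
  nothing on \<open>Z\<close>, the whole message on \<open>F\<close>, and the Reed--Solomon symbol \<open>a + x b mod q\<close>
  elsewhere.\<close>

definition code_coord :: "nat \<Rightarrow> nat set \<Rightarrow> nat set \<Rightarrow> nat \<Rightarrow> nat \<times> nat \<Rightarrow> nat" where
  "code_coord q Z F x v =
    (if x \<in> Z then 0 else if x \<in> F then fst v + q * snd v else (fst v + x * snd v) mod q)"

definition admissible_code_shape :: "nat \<Rightarrow> nat set \<Rightarrow> nat set \<Rightarrow> bool" where
  "admissible_code_shape n Z F \<longleftrightarrow> 0 \<in> Z \<and> 1 \<in> F - Z \<and>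
    (\<forall>i\<in>Mn_atoms n. \<forall>j\<in>Mn_atoms n. i \<noteq> j \<longrightarrow> i \<in> F - Z \<or> j \<in> F - Z \<or> i \<notin> Z \<and> j \<notin> Z)"

lemma inj_on_code_coord:
  assumes "x \<in> F - Z"
  shows "inj_on (code_coord q Z F x) ({..<q} \<times> {..<q})"
proof (rule inj_onI)
  fix v v'
  assume "v \<in> {..<q} \<times> {..<q}" "v' \<in> {..<q} \<times> {..<q}" "code_coord q Z F x v = code_coord q Z F x v'"
  then have "fst v + q * snd v = fst v' + q * snd v'" "fst v < q" "fst v' < q"
    using assms by (auto simp: code_coord_def)
  then show "v = v'"
    using add_mult_base_inj[of "fst v" q "fst v'" "snd v" "snd v'"] by (simp add: prod_eq_iff)
qed

lemma inj_on_code_coord_pair: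
  assumes q: "prime q" "n \<le> q" and shape: "admissible_code_shape n Z F"
    and xy: "x \<in> Mn_carrier n" "y \<in> Mn_carrier n" "x \<noteq> y" "x \<noteq> 0" "y \<noteq> 0"
  shows "inj_on (\<lambda>v. (code_coord q Z F x v, code_coord q Z F y v)) ({..<q} \<times> {..<q})"
proof (cases "x \<in> F - Z \<or> y \<in> F - Z")
  case True
  then show ?thesis
    using inj_on_code_coord[of x F Z q] inj_on_code_coord[of y F Z q] by (auto simp: inj_on_def)
next
  case False
  with xy shape have "x \<notin> Z \<and> x \<notin> F \<and> y \<notin> Z \<and> y \<notin> F"
    unfolding admissible_code_shape_def by blast
  then have \<phi>: "code_coord q Z F x = (\<lambda>v. (fst v + x * snd v) mod q)"
    "code_coord q Z F y = (\<lambda>v. (fst v + y * snd v) mod q)"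
    by (auto simp: code_coord_def)
  have "x < q" "y < q"
    using xy q by (auto simp: Mn_carrier_def)
  show ?thesis
    unfolding \<phi>
  proof (rule inj_onI)
    fix v v'
    assume "v \<in> {..<q} \<times> {..<q}" "v' \<in> {..<q} \<times> {..<q}"
      "((fst v + x * snd v) mod q, (fst v + y * snd v) mod q) = ((fst v' + x * snd v') mod q, (fst v' + y * snd v') mod q)"
    then show "v = v'"
      using linear_mod_pair_inj[OF q(1) \<open>x < q\<close> \<open>y < q\<close> \<open>x \<noteq> y\<close>, of "fst v" "fst v'" "snd v" "snd v'"]
      by (auto simp: prod_eq_iff)
  qed
qed

lemma join_determined_code:
  assumes q: "prime q" "n \<le> q" and shape: "admissible_code_shape n Z F"
  shows "join_determined n (map_pmf (\<lambda>v x. code_coord q Z F x v) (message_pmf q))"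
  unfolding join_determined_def
proof (clarsimp simp: set_message_pmf[OF prime_gt_0_nat[OF q(1)]])
  let ?\<phi> = "code_coord q Z F"
  fix x y a b a' b'
  assume xy: "x \<in> Mn_carrier n" "y \<in> Mn_carrier n" and "a < q" "b < q" "a' < q" "b' < q"
  then have v: "(a, b) \<in> {..<q} \<times> {..<q}" "(a', b') \<in> {..<q} \<times> {..<q}"
    by auto
  show "?\<phi> (Mn_join x y) (a, b) = ?\<phi> (Mn_join x y) (a', b') \<longleftrightarrow>
      ?\<phi> x (a, b) = ?\<phi> x (a', b') \<and> ?\<phi> y (a, b) = ?\<phi> y (a', b')"
  proof (cases "x = y \<or> x = 0 \<or> y = 0")
    case True
    then show ?thesis
      using shape by (auto simp: admissible_code_shape_def Mn_join_def code_coord_def)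
  next
    case False
    then have "Mn_join x y = 1"
      by (simp add: Mn_join_def)
    moreover have "1 \<in> F - Z"
      using shape by (simp add: admissible_code_shape_def)
    ultimately show ?thesis
      using inj_onD[OF inj_on_code_coord _ v] inj_onD[OF inj_on_code_coord_pair[OF q shape xy] _ v] False
      by auto
  qed
qed

lemma entropy_code_coord:
  assumes "0 < q"
  shows "entropy_pmf (map_pmf (code_coord q Z F x) (message_pmf q)) =
    ennreal (if x \<in> Z then 0 else if x \<in> F then 2 * log 2 q else log 2 q)"
proof (cases "x \<in> F - Z")
  case True
  then show ?thesis
    using inj_on_code_coord[OF True] assms
    by (simp add: entropy_pmf_map_inj_on set_message_pmf entropy_message_pmf)
next
  case False
  then have "map_pmf (code_coord q Z F x) (message_pmf q) = (if x \<in> Z then return_pmf 0 else pmf_of_set {..<q})"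
    using map_message_pmf_linear_mod[OF assms, of x] by (auto simp: code_coord_def[abs_def])
  then show ?thesis
    using False assms by (auto simp: entropy_return_pmf entropy_pmf_of_set lessThan_empty_iff)
qed

lemma entropic_code:
  assumes "prime q" "n \<le> q" "admissible_code_shape n Z F"
  shows "entropic n (\<lambda>x. if x \<in> Z then 0 else if x \<in> F then 2 * log 2 q else log 2 q)"
  unfolding entropic_iff
proof (intro exI conjI ballI)
  show "join_determined n (map_pmf (\<lambda>v x. code_coord q Z F x v) (message_pmf q))"
    using join_determined_code[OF assms] .
  fix x
  show "0 \<le> (if x \<in> Z then 0 else if x \<in> F then 2 * log 2 q else log 2 (real q))"
    using prime_ge_2_nat[OF assms(1)] by simp
  show "coord_entropy (map_pmf (\<lambda>v x. code_coord q Z F x v) (message_pmf q)) x =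
      ennreal (if x \<in> Z then 0 else if x \<in> F then 2 * log 2 q else log 2 q)"
    using entropy_code_coord[OF prime_gt_0_nat[OF assms(1)]] by (simp add: map_pmf_comp)
qed

section \<open>Polymatroids on \<open>M\<^sub>n\<close> are limits of entropic functions\<close>

lemma entropic_closure_const: "0 \<le> t \<Longrightarrow> entropic_closure n (\<lambda>x. t)"
  using entropic_closure_scale[OF entropic_one] by simp

lemma entropic_closure_half_profile:
  assumes "0 \<le> t"
  shows "entropic_closure n (\<lambda>x. if x = 0 then 0 else if x = 1 \<or> x \<in> S then t else t / 2)"
proof -
  obtain q :: nat where q: "prime q" "n < q"
    using bigger_prime by blast
  define L where "L = log 2 (real q)"
  have "0 < L"
    using prime_gt_1_nat[OF q(1)] by (simp add: L_def)
  have "entropic n (\<lambda>x. if x \<in> {0} then 0 else if x \<in> insert 1 S then 2 * L else L)"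
    unfolding L_def by (rule entropic_code) (use q in \<open>auto simp: admissible_code_shape_def\<close>)
  then have "entropic_closure n (\<lambda>x. t / (2 * L) * (if x \<in> {0} then 0 else if x \<in> insert 1 S then 2 * L else L))"
    using assms \<open>0 < L\<close> by (intro entropic_closure_scale) auto
  then show ?thesis
    by (rule entropic_closure_cong) (use \<open>0 < L\<close> in auto)
qed

lemma entropic_closure_vanishing_pair:
  assumes "0 \<le> t" "k \<noteq> 1"
  shows "entropic_closure n (\<lambda>x. if x = 0 \<or> x = k then 0 else t)"
proof -
  obtain q :: nat where q: "prime q" "n < q"
    using bigger_prime by blast
  define L where "L = log 2 (real q)"
  have "0 < L"
    using prime_gt_1_nat[OF q(1)] by (simp add: L_def)
  have "entropic n (\<lambda>x. if x \<in> {0, k} then 0 else if x \<in> UNIV - {0, k} then 2 * L else L)"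
    unfolding L_def by (rule entropic_code) (use q assms(2) in \<open>auto simp: admissible_code_shape_def\<close>)
  then have "entropic_closure n (\<lambda>x. t / (2 * L) * (if x \<in> {0, k} then 0 else if x \<in> UNIV - {0, k} then 2 * L else L))"
    using assms \<open>0 < L\<close> by (intro entropic_closure_scale) auto
  then show ?thesis
    by (rule entropic_closure_cong) (use \<open>0 < L\<close> in auto)
qed

definition Mn_balanced :: "nat \<Rightarrow> (nat \<Rightarrow> real) \<Rightarrow> bool" where
  "Mn_balanced n h \<longleftrightarrow> h 0 = 0 \<and> 0 \<le> h 1 \<and> (\<forall>i\<in>Mn_atoms n. h 1 \<le> 2 * h i \<and> h i \<le> h 1)"

definition heavy_atoms :: "nat \<Rightarrow> (nat \<Rightarrow> real) \<Rightarrow> nat set" where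
  "heavy_atoms n h = {i\<in>Mn_atoms n. h 1 < 2 * h i}"

lemma finite_heavy_atoms: "finite (heavy_atoms n h)"
  by (simp add: heavy_atoms_def Mn_carrier_def)

lemma Mn_balanced_peel:
  fixes h :: "nat \<Rightarrow> real" and n k :: nat
  defines "S \<equiv> heavy_atoms n h"
  defines "\<tau> \<equiv> h k - h 1 / 2"
  defines "h' \<equiv> \<lambda>x. h x - (if x = 0 then 0 else if x = 1 \<or> x \<in> S then 2 * \<tau> else \<tau>)"
  assumes balanced: "Mn_balanced n h" and k: "k \<in> S" "\<And>i. i \<in> S \<Longrightarrow> h k \<le> h i"
  shows "Mn_balanced n h'" "heavy_atoms n h' \<subseteq> S - {k}"
proof -
  have "h k \<le> h 1"
    using k(1) balanced by (auto simp: Mn_balanced_def S_def heavy_atoms_def)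
  have h'1: "h' 1 = 2 * (h 1 - h k)"
    by (simp add: h'_def \<tau>_def)
  have h'S: "h' i = h i - 2 * \<tau>" if "i \<in> S" for i
    using that by (auto simp: h'_def S_def heavy_atoms_def)
  have h'_light: "2 * h' i = h' 1" if "i \<in> Mn_atoms n" "i \<notin> S" for i
  proof -
    have "h i = h 1 / 2"
      using that balanced unfolding Mn_balanced_def S_def heavy_atoms_def by force
    with that show ?thesis
      by (simp add: h'_def \<tau>_def)
  qed
  have "h' 1 \<le> 2 * h' i \<and> h' i \<le> h' 1" if "i \<in> Mn_atoms n" for i
  proof (cases "i \<in> S")
    case True
    then show ?thesis
      using h'1 h'S[OF True] k(2)[OF True] balanced that by (auto simp: Mn_balanced_def \<tau>_def)
  next
    case False
    then show ?thesis
      using h'1 h'_light[OF that False] \<open>h k \<le> h 1\<close> by simp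
  qed
  then show "Mn_balanced n h'"
    using balanced h'1 \<open>h k \<le> h 1\<close> by (simp add: Mn_balanced_def h'_def)
  show "heavy_atoms n h' \<subseteq> S - {k}"
  proof
    fix i
    assume i: "i \<in> heavy_atoms n h'"
    then have "i \<in> S"
      using h'_light by (fastforce simp: heavy_atoms_def)
    moreover have "i \<noteq> k"
      using i h'S[OF k(1)] h'1 by (auto simp: heavy_atoms_def \<tau>_def)
    ultimately show "i \<in> S - {k}"
      by simp
  qed
qed

text \<open>Induction on the number of heavy atoms: peeling off a multiple of the half profile
  on the heavy atoms makes the lightest heavy atom light.\<close>

lemma entropic_closure_balanced:
  assumes "Mn_balanced n h"
  shows "entropic_closure n h"
  using assms
proof (induction "card (heavy_atoms n h)" arbitrary: h rule: less_induct)
  case less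
  let ?S = "heavy_atoms n h"
  show ?case
  proof (cases "?S = {}")
    case True
    then have "h x = (if x = 0 then 0 else if x = 1 \<or> x \<in> {} then h 1 else h 1 / 2)" if "x \<in> Mn_carrier n" for x
      using less.prems that unfolding Mn_balanced_def heavy_atoms_def by force
    then show ?thesis
      using less.prems unfolding Mn_balanced_def
      by (intro entropic_closure_cong[OF entropic_closure_half_profile]) auto
  next
    case False
    define k where "k = arg_min_on h ?S"
    have k: "k \<in> ?S" "\<And>i. i \<in> ?S \<Longrightarrow> h k \<le> h i"
      using arg_min_if_finite[OF finite_heavy_atoms False, of h] by (auto simp: k_def not_less)
    define \<tau> where "\<tau> = h k - h 1 / 2"
    define g where "g x = (if x = 0 then 0 else if x = 1 \<or> x \<in> ?S then 2 * \<tau> else \<tau>)" for x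
    have "Mn_balanced n (\<lambda>x. h x - g x)" "heavy_atoms n (\<lambda>x. h x - g x) \<subseteq> ?S - {k}"
      using Mn_balanced_peel[OF less.prems k] unfolding g_def \<tau>_def by simp_all
    moreover have "card (?S - {k}) < card ?S"
      using finite_heavy_atoms k(1) by (rule card_Diff1_less)
    ultimately have "entropic_closure n (\<lambda>x. h x - g x)"
      using less.hyps finite_heavy_atoms card_mono le_less_trans by (metis finite_Diff)
    moreover have "0 < \<tau>"
      using k(1) by (simp add: \<tau>_def heavy_atoms_def)
    then have "entropic_closure n g"
      by (intro entropic_closure_cong[OF entropic_closure_half_profile[where t = "2 * \<tau>"]])
        (auto simp: g_def)
    ultimately show ?thesis
      by (rule entropic_closure_if_diff)
  qed
qed

text \<open>An atom \<open>k\<close> with \<open>2 h k < h 1\<close> is removed by subtracting a function vanishing at \<open>0\<close>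
  and \<open>k\<close>; what remains is balanced because \<open>h 1 \<le> h i + h k\<close>.\<close>

lemma entropic_closure_reduced:
  assumes "h 0 = 0" "0 \<le> h 1" "\<forall>i\<in>Mn_atoms n. 0 \<le> h i \<and> h i \<le> h 1"
    and pairs: "\<forall>i\<in>Mn_atoms n. \<forall>j\<in>Mn_atoms n. i \<noteq> j \<longrightarrow> h 1 \<le> h i + h j"
  shows "entropic_closure n h"
proof (cases "\<forall>i\<in>Mn_atoms n. h 1 \<le> 2 * h i")
  case True
  then show ?thesis
    using assms by (intro entropic_closure_balanced) (auto simp: Mn_balanced_def)
next
  case False
  then obtain k where k: "k \<in> Mn_atoms n" "2 * h k < h 1"
    by (meson not_le)
  then have "k \<noteq> 0" "k \<noteq> 1"
    by auto
  define g where "g x = (if x = 0 \<or> x = k then 0 else h 1 - 2 * h k)" for x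
  define h' where "h' x = h x - g x" for x
  have "h' 1 \<le> 2 * h' i \<and> h' i \<le> h' 1" if "i \<in> Mn_atoms n" for i
  proof (cases "i = k")
    case True
    then show ?thesis
      using k assms(3) \<open>k \<noteq> 0\<close> \<open>k \<noteq> 1\<close> by (auto simp: h'_def g_def)
  next
    case False
    then have "h 1 \<le> h i + h k" "h i \<le> h 1"
      using pairs assms(3) k(1) that by blast+
    with False that \<open>k \<noteq> 1\<close> show ?thesis
      by (auto simp: h'_def g_def)
  qed
  then have "entropic_closure n h'"
    using k assms \<open>k \<noteq> 1\<close> by (intro entropic_closure_balanced) (auto simp: Mn_balanced_def h'_def g_def)
  moreover have "entropic_closure n g"
    unfolding g_def using k by (intro entropic_closure_vanishing_pair) auto
  ultimately show ?thesis
    unfolding h'_def[abs_def] by (rule entropic_closure_if_diff)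
qed

lemma entropic_closure_if_polymatroid:
  assumes "2 \<le> n" "polymatroid n h"
  shows "entropic_closure n h"
proof -
  have carrier: "0 \<in> Mn_carrier n" "1 \<in> Mn_carrier n"
    using assms(1) by (auto simp: Mn_carrier_def)
  have bounds: "h 0 \<le> h i" "h i \<le> h 1" if "i \<in> Mn_carrier n" for i
    using assms(2) that carrier unfolding polymatroid_def by (auto simp: Mn_le_def)
  have "\<forall>i\<in>Mn_atoms n. \<forall>j\<in>Mn_atoms n. i \<noteq> j \<longrightarrow> h 1 - h 0 \<le> (h i - h 0) + (h j - h 0)"
  proof (intro ballI impI)
    fix i j
    assume ij: "i \<in> Mn_atoms n" "j \<in> Mn_atoms n" "i \<noteq> j"
    then have "Mn_join i j = 1" "Mn_meet i j = 0"
      by (auto simp: Mn_join_def Mn_meet_def)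
    then show "h 1 - h 0 \<le> (h i - h 0) + (h j - h 0)"
      using assms(2) ij unfolding polymatroid_def by force
  qed
  then have "entropic_closure n (\<lambda>x. h x - h 0)"
    by (rule entropic_closure_reduced[rotated 3]) (use bounds carrier in auto)
  moreover have "entropic_closure n (\<lambda>x. h 0)"
    using bounds[OF carrier(1)] assms(2) carrier unfolding polymatroid_def
    by (intro entropic_closure_const) auto
  ultimately show ?thesis
    by (rule entropic_closure_if_diff)
qed

theorem theorem6:
  fixes n :: nat
  assumes "n \<ge> 2"
  shows "Shannon_lattice_Mn n"
  unfolding Shannon_lattice_Mn_def
  using entropic_closure_if_polymatroid[OF assms] polymatroid_if_entropic_closure by blast

end
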